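(* Let $(N,\underline X)\in\aleph^{FGM*}$, with associated symmetric Bernoulli sequence $\{I_j\}_{j\ge0}$ (so that $(I_0,\dots,I_n)$ is the vector associated with $C_n$), and let $K_n=I_1+\dots+I_n$. Then for $t\ge0$, $$\mathcal L_S(t)=\gamma_N(0)+\sum_{n=1}^\infty E\Big[\gamma_{N_{[1+I_0]}}(n)\prod_{j=1}^n\mathcal L_{X_{[1+I_j]}}(t)\Big]$$ $$\qquad=\gamma_N(0)+\sum_{i\in\{0,1\}}\sum_{n=1}^\infty\gamma_{N_{[1+i]}}(n)\sum_{k=0}^n\Pr(I_0=i,K_n=k)\,\mathcal L_{X_{[1]}}(t)^{n-k}\mathcal L_{X_{[2]}}(t)^k,$$ where the expectation in the first line is over $(I_0,\dots,I_n)$ and the sums over $n$ run over $n\le\sup A_N$.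
   Context: Collective risk model (CRM): $N$ is a random variable with values in $\mathbb{N}_0$, cdf $F_N$, pmf $\gamma_N(n)=\Pr(N=n)$ and support $A_N=\{n:\gamma_N(n)>0\}$; $\underline X=\{X_j\}_{j\ge1}$ is a sequence of identically distributed strictly positive random variables with common cdf $F_X$ (generic copy $X$); $S=\sum_{j\ge1}X_j\mathbb{1}_{\{N\ge j\}}$. $\mathcal L_Y(t)=E[e^{-tY}]$ is the Laplace–Stieltjes transform. A $d$-variate FGM copula with parameters $\theta_{j_1\dots j_k}$ is $C(u_1,\dots,u_d)=\prod_{m=1}^d u_m\big(1+\sum_{k=2}^d\sum_{j_1<\dots<j_k}\theta_{j_1\dots j_k}\bar u_{j_1}\cdots\bar u_{j_k}\big)$, $\bar u=1-u$, with parameters such that $1+\sum_{k}\sum_{j_1<\dots<j_k}\theta_{j_1\dots j_k}\varepsilon_{j_1}\cdots\varepsilon_{j_k}\ge0$ for all $\varepsilon\in\{-1,1\}^d$. To it is associated the random vector $\boldsymbol I$ on $\{0,1\}^d$ with pmf $f_{\boldsymbol I}(\boldsymbol i)=2^{-d}\big(1+\sum_{k=2}^d\sum_{j_1<\dots<j_k}(-1)^{i_{j_1}+\dots+i_{j_k}}\theta_{j_1\dots j_k}\big)$ (components Bernoulli$(1/2)$). A CRM belongs to $\aleph^{FGM}$ if for every $k\in\mathbb{N}_1$, $k\le\sup A_N$, $F_{N,X_1,\dots,X_k}(n,x_1,\dots,x_k)=C_k(F_N(n),F_X(x_1),\dots,F_X(x_k))$ for a $(k+1)$-variate FGM copula $C_k$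 with coordinates indexed $0,\dots,k$ (index $0$ for $N$); the associated vectors $(I_0,\dots,I_k)$ are consistent and form a sequence $\{I_j\}_{j\ge0}$. It belongs to $\aleph^{FGM*}$ if in addition $(N,X_1,\dots,X_k)\overset d=(N,X_{\pi(1)},\dots,X_{\pi(k)})$ for all such $k$ and permutations $\pi$. For a random variable $Y$, $Y_{[1]}$, $Y_{[2]}$ denote the minimum and maximum of two iid copies of $Y$; $\gamma_{N_{[j]}}(n)=\Pr(N_{[j]}=n)$. *)

theory Defs
  imports "HOL-Probability.Probability" "HOL-Combinatorics.Permutations"
begin

text \<open>FGM parameters of a consistent family of FGM copulas are given by a single
  function theta on finite index sets (index 0 for N, indices 1..k for X_1..X_k);
  the (k+1)-variate copula C_k uses the parameters theta J for J a subset of {0..k}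
  with card J at least 2.\<close>

definition fgm_index_sets :: "nat \<Rightarrow> nat set set" where
  "fgm_index_sets k = {J. J \<subseteq> {0..k} \<and> 2 \<le> card J}"

definition fgm_copula :: "(nat set \<Rightarrow> real) \<Rightarrow> nat \<Rightarrow> (nat \<Rightarrow> real) \<Rightarrow> real" where
  "fgm_copula \<theta> k u =
     (\<Prod>m\<in>{0..k}. u m) * (1 + (\<Sum>J\<in>fgm_index_sets k. \<theta> J * (\<Prod>j\<in>J. 1 - u j)))"

definition fgm_admissible :: "(nat set \<Rightarrow> real) \<Rightarrow> nat \<Rightarrow> bool" where
  "fgm_admissible \<theta> k \<longleftrightarrow>
     (\<forall>\<epsilon>\<in>{0..k} \<rightarrow>\<^sub>E {-1, 1::real}.
        0 \<le> 1 + (\<Sum>J\<in>fgm_index_sets k. \<theta> J * (\<Prod>j\<in>J. \<epsilon> j)))"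

text \<open>pmf of the associated Bernoulli vector (I_0,...,I_k) on {0,1}^{k+1}.\<close>
definition fgm_pmf :: "(nat set \<Rightarrow> real) \<Rightarrow> nat \<Rightarrow> (nat \<Rightarrow> nat) \<Rightarrow> real" where
  "fgm_pmf \<theta> k i =
     (1/2) ^ (k + 1) * (1 + (\<Sum>J\<in>fgm_index_sets k. (-1) ^ (\<Sum>j\<in>J. i j) * \<theta> J))"

definition bern_vectors :: "nat \<Rightarrow> (nat \<Rightarrow> nat) set" where
  "bern_vectors k = {0..k} \<rightarrow>\<^sub>E {0, 1}"

definition fgm_expect :: "(nat set \<Rightarrow> real) \<Rightarrow> nat \<Rightarrow> ((nat \<Rightarrow> nat) \<Rightarrow> real) \<Rightarrow> real" where
  "fgm_expect \<theta> k g = (\<Sum>i\<in>bern_vectors k. fgm_pmf \<theta> k i * g i)"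

definition prob_I0_K :: "(nat set \<Rightarrow> real) \<Rightarrow> nat \<Rightarrow> nat \<Rightarrow> nat \<Rightarrow> real" where
  "prob_I0_K \<theta> n a k =
     (\<Sum>i\<in>{i\<in>bern_vectors n. i 0 = a \<and> (\<Sum>j=1..n. i j) = k}. fgm_pmf \<theta> n i)"

text \<open>ord2 i x y is the (1+i)-th order statistic of {x,y}: min for i = 0, max for i = 1.\<close>
definition ord2 :: "nat \<Rightarrow> 'b::linorder \<Rightarrow> 'b \<Rightarrow> 'b" where
  "ord2 i x y = (if i = 0 then min x y else max x y)"

definition pmf_ord2 :: "nat measure \<Rightarrow> nat \<Rightarrow> nat \<Rightarrow> real" where
  "pmf_ord2 \<mu> i n = measure (\<mu> \<Otimes>\<^sub>M \<mu>) {p\<in>space (\<mu> \<Otimes>\<^sub>M \<mu>). ord2 i (fst p) (snd p) = n}"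

definition LST_ord2 :: "real measure \<Rightarrow> nat \<Rightarrow> real \<Rightarrow> real" where
  "LST_ord2 \<mu> i t = (\<integral>p. exp (- t * ord2 i (fst p) (snd p)) \<partial>(\<mu> \<Otimes>\<^sub>M \<mu>))"

text \<open>n \<le> sup A_N, where A_N is the support of the pmf of N.\<close>
definition le_sup_support :: "'a measure \<Rightarrow> ('a \<Rightarrow> nat) \<Rightarrow> nat \<Rightarrow> bool" where
  "le_sup_support M N n \<longleftrightarrow> (\<exists>m. 0 < measure M {\<omega>\<in>space M. N \<omega> = m} \<and> n \<le> m)"

definition aggregate :: "('a \<Rightarrow> nat) \<Rightarrow> (nat \<Rightarrow> 'a \<Rightarrow> real) \<Rightarrow> 'a \<Rightarrow> real" where
  "aggregate N X \<omega> = (\<Sum>j=1..N \<omega>. X j \<omega>)"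

end

theory Submission
  imports Defs
begin

text \<open>If a random variable has cdf F, the minimum of two iid copies has cdf G_0 \<circ> F and the
  maximum has cdf G_1 \<circ> F, where G_0 v = 2v - v^2 and G_1 v = v^2. Expanding 1 - u = (G_0 u - G_1 u)/2
  shows that the FGM copula is the mixture, weighted by the pmf of (I_0,...,I_k), of the products
  \<Prod>_m G_{i_m}(u_m). Differencing in N, the joint distribution of (X_1,...,X_n) on {N = n} is
  therefore a mixture of products of the cdfs of X_[1+i_j], with weights Pr(N_[1+i_0] = n).
  Writing e^{-tx} = \<integral>_x^\<infinity> t e^{-ty} dy and using Tonelli, each product integrates to
  \<Prod>_j L_{X_[1+i_j]}(t). Summing over the values of N gives the first formula; grouping the
  Bernoulli vectors by (I_0, K_n) gives the second.\<close>

definition order_stat_cdf :: "nat \<Rightarrow> real \<Rightarrow> real" where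
  "order_stat_cdf a v = (if a = 0 then 2 * v - v\<^sup>2 else v\<^sup>2)"

lemma order_stat_cdf_nonneg: "0 \<le> v \<Longrightarrow> v \<le> 1 \<Longrightarrow> 0 \<le> order_stat_cdf a v"
  using mult_left_mono[of v 1 v] by (auto simp: order_stat_cdf_def power2_eq_square)

lemma borel_measurable_order_stat_cdf[measurable]: "order_stat_cdf a \<in> borel_measurable borel"
  unfolding order_stat_cdf_def[abs_def] by measurable

lemma bern_vectors_finite: "finite (bern_vectors k)"
  by (simp add: bern_vectors_def finite_PiE)

lemma bern_vectors_le_1: "i \<in> bern_vectors k \<Longrightarrow> j \<in> {0..k} \<Longrightarrow> i j \<le> 1"
  unfolding bern_vectors_def by (drule (1) PiE_mem) auto

lemma sum_bern_vectors_prod: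
  fixes f :: "nat \<Rightarrow> nat \<Rightarrow> real"
  shows "(\<Sum>i\<in>bern_vectors k. \<Prod>m\<in>{0..k}. f m (i m)) = (\<Prod>m\<in>{0..k}. f m 0 + f m 1)"
proof -
  have "(\<Prod>m\<in>{0..k}. \<Sum>y\<in>{0,1::nat}. f m y) = (\<Sum>i\<in>{0..k} \<rightarrow>\<^sub>E {0,1}. \<Prod>m\<in>{0..k}. f m (i m))"
    by (rule prod_sum_PiE) auto
  then show ?thesis by (simp add: bern_vectors_def)
qed

lemma prod_if_mem_subset:
  fixes g :: "nat \<Rightarrow> real"
  assumes "J \<subseteq> {0..k}"
  shows "(\<Prod>m\<in>{0..k}. if m \<in> J then g m else 1) = (\<Prod>m\<in>J. g m)"
  using prod.inter_restrict[of "{0..k}" g J] assms by (simp add: Int_absorb1)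

subsection \<open>The FGM copula as a mixture of order-statistic products\<close>

lemma fgm_copula_eq_mixture:
  "fgm_copula \<theta> k u = (\<Sum>i\<in>bern_vectors k. fgm_pmf \<theta> k i * (\<Prod>m\<in>{0..k}. order_stat_cdf (i m) (u m)))"
proof -
  define P where "P i = (\<Prod>m\<in>{0..k}. order_stat_cdf (i m) (u m))" for i :: "nat \<Rightarrow> nat"
  have sum_P: "(\<Sum>i\<in>bern_vectors k. P i) = (\<Prod>m\<in>{0..k}. 2 * u m)"
    unfolding P_def by (subst sum_bern_vectors_prod) (simp add: order_stat_cdf_def power2_eq_square)
  have sum_sign_P: "(\<Sum>i\<in>bern_vectors k. (-1) ^ (\<Sum>j\<in>J. i j) * P i)
      = (\<Prod>m\<in>{0..k}. 2 * u m) * (\<Prod>j\<in>J. 1 - u j)"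
    if "J \<in> fgm_index_sets k" for J
  proof -
    have J: "J \<subseteq> {0..k}" using that by (simp add: fgm_index_sets_def)
    have "(-1::real) ^ (\<Sum>j\<in>J. i j) = (\<Prod>m\<in>{0..k}. if m \<in> J then (-1) ^ (i m) else 1)" for i
      by (simp add: prod_if_mem_subset[OF J] power_sum)
    then have "(\<Sum>i\<in>bern_vectors k. (-1) ^ (\<Sum>j\<in>J. i j) * P i)
       = (\<Sum>i\<in>bern_vectors k. \<Prod>m\<in>{0..k}. (if m \<in> J then (-1) ^ (i m) else 1) * order_stat_cdf (i m) (u m))"
      by (simp add: P_def prod.distrib)
    also have "\<dots> = (\<Prod>m\<in>{0..k}. 2 * u m * (if m \<in> J then 1 - u m else 1))"
      by (subst sum_bern_vectors_prod)
        (auto intro!: prod.cong simp: order_stat_cdf_def power2_eq_square algebra_simps)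
    also have "\<dots> = (\<Prod>m\<in>{0..k}. 2 * u m) * (\<Prod>j\<in>J. 1 - u j)"
      by (simp add: prod.distrib prod_if_mem_subset[OF J])
    finally show ?thesis .
  qed
  have "(\<Sum>i\<in>bern_vectors k. fgm_pmf \<theta> k i * P i)
     = (1/2)^(k+1) * ((\<Sum>i\<in>bern_vectors k. P i)
        + (\<Sum>J\<in>fgm_index_sets k. \<theta> J * (\<Sum>i\<in>bern_vectors k. (-1) ^ (\<Sum>j\<in>J. i j) * P i)))"
    by (simp add: fgm_pmf_def sum_distrib_left sum_distrib_right sum.distrib algebra_simps
        sum.swap[of _ "fgm_index_sets k"])
  also have "\<dots> = (1/2)^(k+1) * ((\<Prod>m\<in>{0..k}. 2 * u m)
        + (\<Sum>J\<in>fgm_index_sets k. \<theta> J * ((\<Prod>m\<in>{0..k}. 2 * u m) * (\<Prod>j\<in>J. 1 - u j))))"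
    using sum_sign_P by (simp add: sum_P)
  also have "\<dots> = (1/2)^(k+1) * (\<Prod>m\<in>{0..k}. 2 * u m) *
       (1 + (\<Sum>J\<in>fgm_index_sets k. \<theta> J * (\<Prod>j\<in>J. 1 - u j)))"
    by (simp add: sum_distrib_left algebra_simps)
  also have "(1/2::real)^(k+1) * (\<Prod>m\<in>{0..k}. 2 * u m) = (\<Prod>m\<in>{0..k}. u m)"
    by (simp add: prod.distrib power_one_over[symmetric] flip: power_mult_distrib)
  finally show ?thesis by (simp add: fgm_copula_def P_def)
qed

lemma fgm_pmf_nonneg:
  assumes adm: "fgm_admissible \<theta> k" and i: "i \<in> bern_vectors k"
  shows "0 \<le> fgm_pmf \<theta> k i"
proof -
  define \<epsilon> where "\<epsilon> = (\<lambda>m\<in>{0..k}. (-1::real) ^ (i m))"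
  have \<epsilon>: "\<epsilon> \<in> {0..k} \<rightarrow>\<^sub>E {-1, 1}"
    by (auto simp: \<epsilon>_def) (metis neg_one_even_power neg_one_odd_power)
  have "(\<Sum>J\<in>fgm_index_sets k. (-1) ^ (\<Sum>j\<in>J. i j) * \<theta> J)
      = (\<Sum>J\<in>fgm_index_sets k. \<theta> J * (\<Prod>j\<in>J. \<epsilon> j))"
  proof (rule sum.cong)
    fix J assume "J \<in> fgm_index_sets k"
    then have "J \<subseteq> {0..k}" by (simp add: fgm_index_sets_def)
    then have "(\<Prod>j\<in>J. \<epsilon> j) = (\<Prod>j\<in>J. (-1) ^ (i j))" unfolding \<epsilon>_def by (intro prod.cong) auto
    then show "(-1) ^ (\<Sum>j\<in>J. i j) * \<theta> J = \<theta> J * (\<Prod>j\<in>J. \<epsilon> j)" by (simp add: power_sum)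
  qed simp
  with adm \<epsilon> show ?thesis unfolding fgm_admissible_def fgm_pmf_def by auto
qed

lemma fgm_expect_nonneg:
  assumes "fgm_admissible \<theta> k" and "\<And>i. i \<in> bern_vectors k \<Longrightarrow> 0 \<le> g i"
  shows "0 \<le> fgm_expect \<theta> k g"
  unfolding fgm_expect_def using assms fgm_pmf_nonneg by (intro sum_nonneg mult_nonneg_nonneg)

lemma prob_I0_K_nonneg: "fgm_admissible \<theta> n \<Longrightarrow> 0 \<le> prob_I0_K \<theta> n a k"
  unfolding prob_I0_K_def using fgm_pmf_nonneg by (intro sum_nonneg) auto

text \<open>Setting u_m = 1 for m \<ge> 1 kills every FGM correction term, so I_0 is Bernoulli(1/2)
  whatever \<theta> is.\<close>

lemma fgm_mixture_marginal0:
  "(\<Sum>i\<in>bern_vectors n. fgm_pmf \<theta> n i * order_stat_cdf (i 0) v) = v"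
proof -
  define u where "u m = (if m = 0 then v else 1)" for m :: nat
  have factor_zero: "(\<Prod>j\<in>J. 1 - u j) = 0" if "J \<in> fgm_index_sets n" for J
  proof -
    have "2 \<le> card J" "finite J" using that by (auto simp: fgm_index_sets_def intro: finite_subset)
    then obtain j where "j \<in> J" "j \<noteq> 0"
      by (metis card_le_Suc0_iff_eq insert_absorb insert_not_empty less_eq_Suc_le not_less_eq_eq
          numeral_2_eq_2 subsetI subset_singletonD)
    then show ?thesis using \<open>finite J\<close> by (intro prod_zero bexI[of _ j]) (auto simp: u_def)
  qed
  have prod_u: "(\<Prod>m\<in>{0..n}. f m (u m)) = f 0 v" if "\<And>m. f m 1 = 1" for f :: "nat \<Rightarrow> real \<Rightarrow> real"
  proof -
    have "(\<Prod>m\<in>{Suc 0..n}. f m (u m)) = 1"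
      by (rule prod.neutral) (auto simp: u_def that)
    then show ?thesis
      using prod.atLeast_Suc_atMost[of 0 n "\<lambda>m. f m (u m)"] by (simp add: u_def)
  qed
  have "fgm_copula \<theta> n u = v"
    using factor_zero prod_u[of "\<lambda>_ x. x"] by (simp add: fgm_copula_def)
  moreover have "(\<Prod>m\<in>{0..n}. order_stat_cdf (i m) (u m)) = order_stat_cdf (i 0) v" for i
    by (rule prod_u) (simp add: order_stat_cdf_def)
  ultimately show ?thesis
    using fgm_copula_eq_mixture[of \<theta> n u] by simp
qed

subsection \<open>Order statistics of two iid copies\<close>

lemma measure_pair_measure_Times:
  assumes "prob_space \<mu>" and "A \<in> sets \<mu>" and "B \<in> sets \<mu>"
  shows "measure (\<mu> \<Otimes>\<^sub>M \<mu>) (A \<times> B) = measure \<mu> A * measure \<mu> B"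
proof -
  interpret prob_space \<mu> by fact
  show ?thesis
    using emeasure_pair_measure_Times[OF assms(2,3)] by (simp add: measure_def enn2real_mult)
qed

lemma measure_ord2_le:
  fixes \<mu> :: "'b::linorder measure"
  assumes P: "prob_space \<mu>" and sp: "space \<mu> = UNIV"
    and le_sets: "\<And>y. {..y} \<in> sets \<mu>" and gr_sets: "\<And>y. {y<..} \<in> sets \<mu>"
  shows "measure (\<mu> \<Otimes>\<^sub>M \<mu>) {p\<in>space (\<mu> \<Otimes>\<^sub>M \<mu>). ord2 a (fst p) (snd p) \<le> y}
         = order_stat_cdf a (measure \<mu> {..y})"
proof -
  interpret prob_space \<mu> by fact
  interpret pair_prob_space \<mu> \<mu> by unfold_locales
  have spp: "space (\<mu> \<Otimes>\<^sub>M \<mu>) = UNIV" by (simp add: space_pair_measure sp)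
  have compl: "measure \<mu> {y<..} = 1 - measure \<mu> {..y}"
    using prob_space.prob_compl[OF P le_sets] by (simp add: sp Compl_eq_Diff_UNIV[symmetric])
  show ?thesis
  proof (cases "a = 0")
    case True
    have "{p\<in>space (\<mu> \<Otimes>\<^sub>M \<mu>). ord2 a (fst p) (snd p) \<le> y} = space (\<mu> \<Otimes>\<^sub>M \<mu>) - {y<..} \<times> {y<..}"
      using True unfolding spp ord2_def by (auto simp: min_le_iff_disj not_le)
    then have "measure (\<mu> \<Otimes>\<^sub>M \<mu>) {p\<in>space (\<mu> \<Otimes>\<^sub>M \<mu>). ord2 a (fst p) (snd p) \<le> y}
       = 1 - measure \<mu> {y<..} * measure \<mu> {y<..}"
      using P.prob_compl[of "{y<..} \<times> {y<..}"] measure_pair_measure_Times[OF P gr_sets gr_sets]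
        gr_sets by simp
    then show ?thesis
      using True unfolding compl order_stat_cdf_def by (simp add: power2_eq_square algebra_simps)
  next
    case False
    have "{p\<in>space (\<mu> \<Otimes>\<^sub>M \<mu>). ord2 a (fst p) (snd p) \<le> y} = {..y} \<times> {..y}"
      using False unfolding spp ord2_def by auto
    then show ?thesis
      using False measure_pair_measure_Times[OF P le_sets le_sets]
      by (simp add: order_stat_cdf_def power2_eq_square)
  qed
qed

lemma pmf_ord2_eq_diff:
  fixes M :: "'a measure" and N :: "'a \<Rightarrow> nat"
  assumes P: "prob_space M" and N_meas: "N \<in> measurable M (count_space UNIV)" and n: "1 \<le> n"
  shows "pmf_ord2 (distr M (count_space UNIV) N) a n
       = order_stat_cdf a (measure M {\<omega>\<in>space M. N \<omega> \<le> n})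
         - order_stat_cdf a (measure M {\<omega>\<in>space M. N \<omega> \<le> n - 1})"
proof -
  define \<mu> where "\<mu> = distr M (count_space UNIV) N"
  have P\<mu>: "prob_space \<mu>" unfolding \<mu>_def by (rule prob_space.prob_space_distr[OF P N_meas])
  interpret pair_prob_space \<mu> \<mu>
    using P\<mu> by (simp add: pair_prob_space_def pair_sigma_finite_def prob_space_imp_sigma_finite)
  have sets_\<mu>: "sets \<mu> = UNIV" "space \<mu> = UNIV" by (simp_all add: \<mu>_def)
  have sets_pair: "sets (\<mu> \<Otimes>\<^sub>M \<mu>) = sets (count_space UNIV \<Otimes>\<^sub>M count_space (UNIV::nat set))"
    by (rule sets_pair_measure_cong) (simp_all add: \<mu>_def)
  have all_sets: "S \<in> sets (\<mu> \<Otimes>\<^sub>M \<mu>)" for S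
    unfolding sets_pair pair_measure_countable[of "UNIV::nat set" "UNIV::nat set", simplified] by simp
  have cdf_N: "measure \<mu> {..m} = measure M {\<omega>\<in>space M. N \<omega> \<le> m}" for m
    unfolding \<mu>_def using N_meas by (subst measure_distr) (auto intro!: arg_cong[where f="measure M"])
  define Q where "Q m = {p\<in>space (\<mu> \<Otimes>\<^sub>M \<mu>). ord2 a (fst p) (snd p) \<le> m}" for m
  have "{p\<in>space (\<mu> \<Otimes>\<^sub>M \<mu>). ord2 a (fst p) (snd p) = n} = Q n - Q (n - 1)"
    using n by (auto simp: Q_def)
  moreover have "Q (n - 1) \<subseteq> Q n" by (auto simp: Q_def)
  ultimately have "pmf_ord2 \<mu> a n = measure (\<mu> \<Otimes>\<^sub>M \<mu>) (Q n) - measure (\<mu> \<Otimes>\<^sub>M \<mu>) (Q (n - 1))"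
    unfolding pmf_ord2_def by (simp add: P.finite_measure_Diff all_sets)
  moreover have "measure (\<mu> \<Otimes>\<^sub>M \<mu>) (Q m) = order_stat_cdf a (measure M {\<omega>\<in>space M. N \<omega> \<le> m})" for m
    using measure_ord2_le[OF P\<mu> sets_\<mu>(2)] by (simp add: Q_def sets_\<mu> cdf_N)
  ultimately show ?thesis by (simp add: \<mu>_def)
qed

subsection \<open>Laplace transforms through distribution functions\<close>

definition exp_density :: "real \<Rightarrow> real \<Rightarrow> real" where
  "exp_density t y = (if 0 \<le> y then t * exp (- t * y) else 0)"

lemma borel_measurable_exp_density[measurable]: "exp_density t \<in> borel_measurable borel"
  unfolding exp_density_def by measurable

lemma nn_integral_exp_density_atLeast:
  assumes t: "0 < t" and x: "0 \<le> x"
  shows "(\<integral>\<^sup>+y. (if x \<le> y then ennreal (exp_density t y) else 0) \<partial>lborel) = ennreal (exp (- t * x))"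
proof -
  have "LIM y at_top. (- t) * y :> at_bot"
    by (rule filterlim_tendsto_neg_mult_at_bot[OF tendsto_const]) (use t in \<open>auto intro: filterlim_ident\<close>)
  then have "((\<lambda>y. exp (- t * y)) \<longlongrightarrow> 0) at_top"
    by (intro filterlim_compose[OF exp_at_bot]) simp
  then have lim: "((\<lambda>y. - exp (- t * y)) \<longlongrightarrow> 0) at_top"
    using tendsto_minus by fastforce
  have "(\<integral>\<^sup>+y. ennreal (t * exp (- t * y)) * indicator {x..} y \<partial>lborel) = 0 - (- exp (- t * x))"
    by (rule nn_integral_FTC_atLeast[where F="\<lambda>y. - exp (- t * y)"])
       (use t lim in \<open>auto intro!: derivative_eq_intros\<close>)
  moreover have "(\<integral>\<^sup>+y. (if x \<le> y then ennreal (exp_density t y) else 0) \<partial>lborel)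
      = (\<integral>\<^sup>+y. ennreal (t * exp (- t * y)) * indicator {x..} y \<partial>lborel)"
    using x by (intro nn_integral_cong) (auto simp: exp_density_def indicator_def)
  ultimately show ?thesis by simp
qed

lemma nn_integral_indicator_prod_exp:
  fixes M :: "'a measure" and Z :: "'j \<Rightarrow> 'a \<Rightarrow> real"
  assumes "prob_space M" and t: "0 < t" and J: "finite J" and A: "A \<in> sets M"
    and Z_meas: "\<And>j. j \<in> J \<Longrightarrow> Z j \<in> borel_measurable M"
    and Z_nonneg: "\<And>j. j \<in> J \<Longrightarrow> AE \<omega> in M. 0 \<le> Z j \<omega>"
  shows "(\<integral>\<^sup>+\<omega>. indicator A \<omega> * (\<Prod>j\<in>J. ennreal (exp (- t * Z j \<omega>))) \<partial>M)
       = (\<integral>\<^sup>+y. emeasure M {\<omega>\<in>A. \<forall>j\<in>J. Z j \<omega> \<le> y j} * (\<Prod>j\<in>J. ennreal (exp_density t (y j)))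
            \<partial>PiM J (\<lambda>_. lborel))"
proof -
  interpret prob_space M by fact
  interpret PL: product_sigma_finite "\<lambda>_::'j. lborel" by standard
  interpret SP: sigma_finite_measure "PiM J (\<lambda>_::'j. lborel)" by (rule PL.sigma_finite[OF J])
  interpret pair_sigma_finite M "PiM J (\<lambda>_::'j. lborel)" by unfold_locales
  define k where "k j \<omega> y = (if Z j \<omega> \<le> y then ennreal (exp_density t y) else 0)" for j \<omega> y
  have k_meas: "k j \<omega> \<in> borel_measurable borel" for j \<omega>
    unfolding k_def by measurable
  have "AE \<omega> in M. \<forall>j\<in>J. 0 \<le> Z j \<omega>"
    using J Z_nonneg by (simp add: AE_finite_all)
  then have "(\<integral>\<^sup>+\<omega>. indicator A \<omega> * (\<Prod>j\<in>J. ennreal (exp (- t * Z j \<omega>))) \<partial>M)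
      = (\<integral>\<^sup>+\<omega>. indicator A \<omega> * (\<Prod>j\<in>J. \<integral>\<^sup>+y. k j \<omega> y \<partial>lborel) \<partial>M)"
    by (intro nn_integral_cong_AE)
      (auto intro!: prod.cong simp: k_def nn_integral_exp_density_atLeast[OF t])
  also have "\<dots> = (\<integral>\<^sup>+\<omega>. indicator A \<omega> * (\<integral>\<^sup>+y. (\<Prod>j\<in>J. k j \<omega> (y j)) \<partial>PiM J (\<lambda>_. lborel)) \<partial>M)"
    by (subst PL.product_nn_integral_prod[OF J]) (auto simp: k_meas)
  also have "\<dots> = (\<integral>\<^sup>+\<omega>. \<integral>\<^sup>+y. indicator A \<omega> * (\<Prod>j\<in>J. k j \<omega> (y j)) \<partial>PiM J (\<lambda>_. lborel) \<partial>M)"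
    by (subst nn_integral_cmult) (auto simp: k_def)
  also have "\<dots> = (\<integral>\<^sup>+y. \<integral>\<^sup>+\<omega>. indicator A \<omega> * (\<Prod>j\<in>J. k j \<omega> (y j)) \<partial>M \<partial>PiM J (\<lambda>_. lborel))"
  proof (rule Fubini'[symmetric])
    show "(\<lambda>(\<omega>, y). indicator A \<omega> * (\<Prod>j\<in>J. k j \<omega> (y j)))
        \<in> borel_measurable (M \<Otimes>\<^sub>M PiM J (\<lambda>_. lborel))"
      unfolding k_def using A Z_meas by measurable
  qed
  also have "\<dots> = (\<integral>\<^sup>+y. emeasure M {\<omega>\<in>A. \<forall>j\<in>J. Z j \<omega> \<le> y j} * (\<Prod>j\<in>J. ennreal (exp_density t (y j)))
            \<partial>PiM J (\<lambda>_. lborel))"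
  proof (rule nn_integral_cong)
    fix y
    let ?S = "{\<omega>\<in>A. \<forall>j\<in>J. Z j \<omega> \<le> y j}"
    have "?S \<in> sets M" using A Z_meas J by measurable
    moreover have "indicator A \<omega> * (\<Prod>j\<in>J. k j \<omega> (y j))
        = (\<Prod>j\<in>J. ennreal (exp_density t (y j))) * indicator ?S \<omega>" for \<omega>
      using J by (auto simp: k_def indicator_def intro!: prod.cong prod_zero)
    ultimately show "(\<integral>\<^sup>+\<omega>. indicator A \<omega> * (\<Prod>j\<in>J. k j \<omega> (y j)) \<partial>M)
       = emeasure M ?S * (\<Prod>j\<in>J. ennreal (exp_density t (y j)))"
      by (simp add: nn_integral_cmult_indicator mult.commute)
  qed
  finally show ?thesis .
qed

lemma nn_integral_exp_eq_cdf:
  fixes M :: "'a measure" and Z :: "'a \<Rightarrow> real"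
  assumes P: "prob_space M" and t: "0 < t" and Z_meas: "Z \<in> borel_measurable M"
    and Z_nonneg: "AE \<omega> in M. 0 \<le> Z \<omega>"
  shows "(\<integral>\<^sup>+\<omega>. ennreal (exp (- t * Z \<omega>)) \<partial>M)
       = (\<integral>\<^sup>+y. ennreal (measure M {\<omega>\<in>space M. Z \<omega> \<le> y}) * ennreal (exp_density t y) \<partial>lborel)"
proof -
  interpret prob_space M by fact
  interpret PL: product_sigma_finite "\<lambda>_::unit. lborel" by standard
  have [measurable]: "(\<lambda>y. measure M {\<omega>\<in>space M. Z \<omega> \<le> y}) \<in> borel_measurable borel"
    using Z_meas by (intro borel_measurable_mono monoI finite_measure_mono) auto
  have "(\<integral>\<^sup>+\<omega>. ennreal (exp (- t * Z \<omega>)) \<partial>M)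
      = (\<integral>\<^sup>+\<omega>. indicator (space M) \<omega> * (\<Prod>j\<in>{()}. ennreal (exp (- t * Z \<omega>))) \<partial>M)"
    by (intro nn_integral_cong) simp
  also have "\<dots> = (\<integral>\<^sup>+y. emeasure M {\<omega>\<in>space M. Z \<omega> \<le> y ()} * ennreal (exp_density t (y ()))
      \<partial>PiM {()} (\<lambda>_. lborel))"
    using nn_integral_indicator_prod_exp[OF P t, of "{()}" "space M" "\<lambda>_. Z"] Z_meas Z_nonneg by simp
  also have "\<dots> = (\<integral>\<^sup>+y. ennreal (measure M {\<omega>\<in>space M. Z \<omega> \<le> y}) * ennreal (exp_density t y) \<partial>lborel)"
    using PL.product_nn_integral_singleton[of "\<lambda>y. ennreal (measure M {\<omega>\<in>space M. Z \<omega> \<le> y})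
        * ennreal (exp_density t y)" "()"]
    by (simp add: emeasure_eq_measure measurable_lborel1)
  finally show ?thesis .
qed

lemma LST_ord2_nonneg: "0 \<le> LST_ord2 \<mu> a t"
  unfolding LST_ord2_def by (rule integral_nonneg_AE) simp

lemma LST_ord2_eq_nn_integral_cdf:
  fixes \<mu> :: "real measure"
  assumes P\<mu>: "prob_space \<mu>" and sets_\<mu>: "sets \<mu> = sets borel" and nonneg: "AE x in \<mu>. 0 \<le> x"
    and t: "0 < t"
  shows "ennreal (LST_ord2 \<mu> a t)
       = (\<integral>\<^sup>+y. ennreal (order_stat_cdf a (measure \<mu> {..y})) * ennreal (exp_density t y) \<partial>lborel)"
proof -
  interpret pair_prob_space \<mu> \<mu>
    using P\<mu> by (simp add: pair_prob_space_def pair_sigma_finite_def prob_space_imp_sigma_finite)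
  have space_\<mu>: "space \<mu> = UNIV" using sets_eq_imp_space_eq[OF sets_\<mu>] by simp
  have [measurable]: "(\<lambda>x. x) \<in> borel_measurable \<mu>" by (rule measurable_ident_sets[OF sets_\<mu>])
  define Z where "Z p = ord2 a (fst p) (snd p)" for p :: "real \<times> real"
  have Z_meas: "Z \<in> borel_measurable (\<mu> \<Otimes>\<^sub>M \<mu>)"
    unfolding Z_def ord2_def by measurable
  have Z_nonneg: "AE p in \<mu> \<Otimes>\<^sub>M \<mu>. 0 \<le> Z p"
  proof (rule AE_pair_measure)
    show "{p \<in> space (\<mu> \<Otimes>\<^sub>M \<mu>). 0 \<le> Z p} \<in> sets (\<mu> \<Otimes>\<^sub>M \<mu>)" using Z_meas by measurable
    show "AE x in \<mu>. AE y in \<mu>. 0 \<le> Z (x, y)"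
      using nonneg by eventually_elim (use nonneg in eventually_elim, auto simp: Z_def ord2_def)
  qed
  have "integrable (\<mu> \<Otimes>\<^sub>M \<mu>) (\<lambda>p. exp (- t * Z p))"
    using Z_meas Z_nonneg t
    by (intro integrable_const_bound[where B=1]) (auto elim!: eventually_mono simp: mult_nonneg_nonneg)
  then have "ennreal (LST_ord2 \<mu> a t) = (\<integral>\<^sup>+p. ennreal (exp (- t * Z p)) \<partial>(\<mu> \<Otimes>\<^sub>M \<mu>))"
    unfolding LST_ord2_def Z_def by (simp add: nn_integral_eq_integral)
  also have "\<dots> = (\<integral>\<^sup>+y. ennreal (measure (\<mu> \<Otimes>\<^sub>M \<mu>) {p\<in>space (\<mu> \<Otimes>\<^sub>M \<mu>). Z p \<le> y})
      * ennreal (exp_density t y) \<partial>lborel)"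
    by (rule nn_integral_exp_eq_cdf[OF P.prob_space_axioms t Z_meas Z_nonneg])
  also have "\<dots> = (\<integral>\<^sup>+y. ennreal (order_stat_cdf a (measure \<mu> {..y})) * ennreal (exp_density t y) \<partial>lborel)"
    using measure_ord2_le[OF P\<mu> space_\<mu>, of a] sets_\<mu> by (simp add: Z_def)
  finally show ?thesis .
qed

lemma nn_integral_PiM_sum_prod:
  fixes c :: "'i \<Rightarrow> ennreal" and f :: "'i \<Rightarrow> 'j \<Rightarrow> real \<Rightarrow> ennreal"
  assumes I: "finite I" and J: "finite J" and f_meas: "\<And>i j. f i j \<in> borel_measurable borel"
  shows "(\<integral>\<^sup>+y. (\<Sum>i\<in>I. c i * (\<Prod>j\<in>J. f i j (y j))) \<partial>PiM J (\<lambda>_. lborel))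
       = (\<Sum>i\<in>I. c i * (\<Prod>j\<in>J. \<integral>\<^sup>+x. f i j x \<partial>lborel))"
proof -
  interpret PL: product_sigma_finite "\<lambda>_::'j. lborel" by standard
  have [measurable]: "f i j \<in> borel_measurable lborel" for i j
    using f_meas by (simp add: measurable_lborel1)
  show ?thesis
    by (simp add: nn_integral_sum nn_integral_cmult PL.product_nn_integral_prod[OF J])
qed

lemma ennreal_sum_mult_prod:
  fixes c :: "'i \<Rightarrow> real" and g :: "'i \<Rightarrow> 'j \<Rightarrow> real"
  assumes "\<And>i. i \<in> I \<Longrightarrow> 0 \<le> c i" and "\<And>i j. i \<in> I \<Longrightarrow> j \<in> J \<Longrightarrow> 0 \<le> g i j"
  shows "ennreal (\<Sum>i\<in>I. c i * (\<Prod>j\<in>J. g i j)) = (\<Sum>i\<in>I. ennreal (c i) * (\<Prod>j\<in>J. ennreal (g i j)))"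
proof -
  have "ennreal (c i * (\<Prod>j\<in>J. g i j)) = ennreal (c i) * (\<Prod>j\<in>J. ennreal (g i j))" if "i \<in> I" for i
    using assms that by (simp add: ennreal_mult prod_nonneg prod_ennreal)
  then show ?thesis
    using assms by (subst sum_ennreal[symmetric]) (auto intro!: sum.cong mult_nonneg_nonneg prod_nonneg)
qed

lemma LST_ord2_zero:
  assumes "prob_space \<mu>"
  shows "LST_ord2 \<mu> a 0 = 1"
proof -
  interpret pair_prob_space \<mu> \<mu>
    using assms by (simp add: pair_prob_space_def pair_sigma_finite_def prob_space_imp_sigma_finite)
  show ?thesis by (simp add: LST_ord2_def P.prob_space)
qed

subsection \<open>The claim count and the claim sizes on the event N = n\<close>

lemma measure_N_eq_fgm_expect:
  fixes M :: "'a measure" and N :: "'a \<Rightarrow> nat"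
  assumes P: "prob_space M" and N_meas[measurable]: "N \<in> measurable M (count_space UNIV)"
    and n: "1 \<le> n"
  shows "measure M {\<omega>\<in>space M. N \<omega> = n}
       = fgm_expect \<theta> n (\<lambda>i. pmf_ord2 (distr M (count_space UNIV) N) (i 0) n)"
proof -
  interpret prob_space M by fact
  define F where "F m = measure M {\<omega>\<in>space M. N \<omega> \<le> m}" for m
  have eq: "{\<omega>\<in>space M. N \<omega> = n} = {\<omega>\<in>space M. N \<omega> \<le> n} - {\<omega>\<in>space M. N \<omega> \<le> n - 1}"
    using n by auto
  have "measure M {\<omega>\<in>space M. N \<omega> = n} = F n - F (n - 1)"
    unfolding F_def eq by (rule finite_measure_Diff) auto
  also have "\<dots> = (\<Sum>i\<in>bern_vectors n. fgm_pmf \<theta> n i *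
      (order_stat_cdf (i 0) (F n) - order_stat_cdf (i 0) (F (n - 1))))"
    by (simp add: right_diff_distrib sum_subtractf fgm_mixture_marginal0)
  also have "\<dots> = fgm_expect \<theta> n (\<lambda>i. pmf_ord2 (distr M (count_space UNIV) N) (i 0) n)"
    by (simp add: fgm_expect_def pmf_ord2_eq_diff[OF P N_meas n] F_def)
  finally show ?thesis .
qed

lemma measure_N_eq_X_le:
  fixes M :: "'a measure" and N :: "'a \<Rightarrow> nat" and X :: "nat \<Rightarrow> 'a \<Rightarrow> real"
  assumes P: "prob_space M"
    and N_meas[measurable]: "N \<in> measurable M (count_space UNIV)"
    and X_meas: "\<And>j. 1 \<le> j \<Longrightarrow> X j \<in> borel_measurable M"
    and copula: "\<And>m x. measure M {\<omega>\<in>space M. N \<omega> \<le> m \<and> (\<forall>j\<in>{1..n}. X j \<omega> \<le> x j)}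
        = fgm_copula \<theta> n (\<lambda>m'. if m' = 0 then measure M {\<omega>\<in>space M. N \<omega> \<le> m}
                                else measure M {\<omega>\<in>space M. X 1 \<omega> \<le> x m'})"
    and n: "1 \<le> n"
  shows "measure M {\<omega>\<in>space M. N \<omega> = n \<and> (\<forall>j\<in>{1..n}. X j \<omega> \<le> y j)}
    = (\<Sum>i\<in>bern_vectors n. fgm_pmf \<theta> n i * (pmf_ord2 (distr M (count_space UNIV) N) (i 0) n
         * (\<Prod>j=1..n. order_stat_cdf (i j) (measure M {\<omega>\<in>space M. X 1 \<omega> \<le> y j}))))"
proof -
  interpret prob_space M by fact
  define FX where "FX j = measure M {\<omega>\<in>space M. X 1 \<omega> \<le> y j}" for j
  define FN where "FN m = measure M {\<omega>\<in>space M. N \<omega> \<le> m}" for m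
  define PR where "PR i = (\<Prod>j=1..n. order_stat_cdf (i j) (FX j))" for i :: "nat \<Rightarrow> nat"
  define S where "S m = {\<omega>\<in>space M. N \<omega> \<le> m \<and> (\<forall>j\<in>{1..n}. X j \<omega> \<le> y j)}" for m
  have "X j \<in> borel_measurable M" if "j \<in> {1..n}" for j
    using X_meas that by simp
  then have S_sets: "S m \<in> sets M" for m
    unfolding S_def by measurable
  have measure_S: "measure M (S m) = (\<Sum>i\<in>bern_vectors n. fgm_pmf \<theta> n i * (order_stat_cdf (i 0) (FN m) * PR i))" for m
  proof -
    have "(\<Prod>m'\<in>{0..n}. order_stat_cdf (i m') (if m' = 0 then FN m else FX m'))
        = order_stat_cdf (i 0) (FN m) * PR i" for i
      unfolding PR_def by (subst prod.atLeast_Suc_atMost) (auto intro!: prod.cong)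
    moreover have "measure M (S m) = fgm_copula \<theta> n (\<lambda>m'. if m' = 0 then FN m else FX m')"
      unfolding S_def copula FN_def FX_def ..
    ultimately show ?thesis by (simp add: fgm_copula_eq_mixture)
  qed
  have "{\<omega>\<in>space M. N \<omega> = n \<and> (\<forall>j\<in>{1..n}. X j \<omega> \<le> y j)} = S n - S (n - 1)"
    using n by (auto simp: S_def)
  moreover have "S (n - 1) \<subseteq> S n" by (auto simp: S_def)
  ultimately have "measure M {\<omega>\<in>space M. N \<omega> = n \<and> (\<forall>j\<in>{1..n}. X j \<omega> \<le> y j)}
      = measure M (S n) - measure M (S (n - 1))"
    using S_sets by (simp add: finite_measure_Diff)
  also have "\<dots> = (\<Sum>i\<in>bern_vectors n. fgm_pmf \<theta> n i *
      ((order_stat_cdf (i 0) (FN n) - order_stat_cdf (i 0) (FN (n - 1))) * PR i))"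
    unfolding measure_S by (simp add: sum_subtractf[symmetric] algebra_simps)
  also have "\<dots> = (\<Sum>i\<in>bern_vectors n. fgm_pmf \<theta> n i * (pmf_ord2 (distr M (count_space UNIV) N) (i 0) n * PR i))"
    unfolding FN_def pmf_ord2_eq_diff[OF P N_meas n] ..
  finally show ?thesis unfolding PR_def FX_def .
qed

lemma nn_integral_N_eq_prod_exp_pos:
  fixes M :: "'a measure" and N :: "'a \<Rightarrow> nat" and X :: "nat \<Rightarrow> 'a \<Rightarrow> real"
  assumes P: "prob_space M"
    and N_meas[measurable]: "N \<in> measurable M (count_space UNIV)"
    and X_meas: "\<And>j. 1 \<le> j \<Longrightarrow> X j \<in> borel_measurable M"
    and X_nonneg: "\<And>j. 1 \<le> j \<Longrightarrow> AE \<omega> in M. 0 \<le> X j \<omega>"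
    and adm: "fgm_admissible \<theta> n"
    and copula: "\<And>m x. measure M {\<omega>\<in>space M. N \<omega> \<le> m \<and> (\<forall>j\<in>{1..n}. X j \<omega> \<le> x j)}
        = fgm_copula \<theta> n (\<lambda>m'. if m' = 0 then measure M {\<omega>\<in>space M. N \<omega> \<le> m}
                                else measure M {\<omega>\<in>space M. X 1 \<omega> \<le> x m'})"
    and t: "0 < t" and n: "1 \<le> n"
  shows "(\<integral>\<^sup>+\<omega>. indicator {\<omega>\<in>space M. N \<omega> = n} \<omega> * (\<Prod>j\<in>{1..n}. ennreal (exp (- t * X j \<omega>))) \<partial>M)
       = ennreal (fgm_expect \<theta> n (\<lambda>i. pmf_ord2 (distr M (count_space UNIV) N) (i 0) n
                   * (\<Prod>j=1..n. LST_ord2 (distr M borel (X 1)) (i j) t)))"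
proof -
  interpret prob_space M by fact
  define \<mu>X where "\<mu>X = distr M borel (X 1)"
  define FX where "FX y = measure M {\<omega>\<in>space M. X 1 \<omega> \<le> y}" for y
  define c where "c i = fgm_pmf \<theta> n i * pmf_ord2 (distr M (count_space UNIV) N) (i 0) n" for i
  define f where "f a y = ennreal (order_stat_cdf a (FX y)) * ennreal (exp_density t y)" for a y
  have X1_meas[measurable]: "X 1 \<in> borel_measurable M" using X_meas by simp
  have c_nonneg: "0 \<le> c i" if "i \<in> bern_vectors n" for i
    unfolding c_def using fgm_pmf_nonneg[OF adm that] by (simp add: pmf_ord2_def)
  have cdf_nonneg: "0 \<le> order_stat_cdf a (FX y)" for a y
    by (rule order_stat_cdf_nonneg) (simp_all add: FX_def)
  have "{\<omega>\<in>space M. X 1 \<omega> \<le> y} \<in> sets M" for y by measurable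
  then have [measurable]: "FX \<in> borel_measurable borel"
    unfolding FX_def by (intro borel_measurable_mono monoI finite_measure_mono) (auto simp: One_nat_def)
  have LST: "ennreal (LST_ord2 \<mu>X a t) = (\<integral>\<^sup>+y. f a y \<partial>lborel)" for a
  proof -
    have "measure \<mu>X {..y} = FX y" for y
      unfolding \<mu>X_def FX_def
      by (subst measure_distr[OF X1_meas]) (auto intro!: arg_cong[where f="measure M"])
    moreover have "AE x in \<mu>X. 0 \<le> x"
      unfolding \<mu>X_def using X_nonneg[of 1] by (subst AE_distr_iff[OF X1_meas]) auto
    moreover have "prob_space \<mu>X" "sets \<mu>X = sets borel"
      unfolding \<mu>X_def by (rule prob_space_distr[OF X1_meas]) simp
    ultimately show ?thesis
      using LST_ord2_eq_nn_integral_cdf[of \<mu>X t a] t by (simp add: f_def)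
  qed
  have "(\<integral>\<^sup>+\<omega>. indicator {\<omega>\<in>space M. N \<omega> = n} \<omega> * (\<Prod>j\<in>{1..n}. ennreal (exp (- t * X j \<omega>))) \<partial>M)
      = (\<integral>\<^sup>+y. emeasure M {\<omega>\<in>{\<omega>\<in>space M. N \<omega> = n}. \<forall>j\<in>{1..n}. X j \<omega> \<le> y j}
          * (\<Prod>j\<in>{1..n}. ennreal (exp_density t (y j))) \<partial>PiM {1..n} (\<lambda>_. lborel))"
    by (rule nn_integral_indicator_prod_exp[OF P t]) (auto intro: X_meas X_nonneg)
  also have "\<dots> = (\<integral>\<^sup>+y. (\<Sum>i\<in>bern_vectors n. ennreal (c i) * (\<Prod>j\<in>{1..n}. f (i j) (y j)))
      \<partial>PiM {1..n} (\<lambda>_. lborel))"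
  proof (rule nn_integral_cong)
    fix y :: "nat \<Rightarrow> real"
    have "emeasure M {\<omega>\<in>{\<omega>\<in>space M. N \<omega> = n}. \<forall>j\<in>{1..n}. X j \<omega> \<le> y j}
        = ennreal (\<Sum>i\<in>bern_vectors n. c i * (\<Prod>j\<in>{1..n}. order_stat_cdf (i j) (FX (y j))))"
    proof -
      have "{\<omega>\<in>{\<omega>\<in>space M. N \<omega> = n}. \<forall>j\<in>{1..n}. X j \<omega> \<le> y j}
          = {\<omega>\<in>space M. N \<omega> = n \<and> (\<forall>j\<in>{1..n}. X j \<omega> \<le> y j)}" by auto
      then show ?thesis
        using measure_N_eq_X_le[OF P N_meas X_meas copula n, of y]
        by (simp add: emeasure_eq_measure c_def FX_def mult.assoc)
    qed
    also have "\<dots> = (\<Sum>i\<in>bern_vectors n. ennreal (c i) * (\<Prod>j\<in>{1..n}. ennreal (order_stat_cdf (i j) (FX (y j)))))"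
      using c_nonneg cdf_nonneg by (rule ennreal_sum_mult_prod)
    finally show "emeasure M {\<omega>\<in>{\<omega>\<in>space M. N \<omega> = n}. \<forall>j\<in>{1..n}. X j \<omega> \<le> y j}
        * (\<Prod>j\<in>{1..n}. ennreal (exp_density t (y j)))
      = (\<Sum>i\<in>bern_vectors n. ennreal (c i) * (\<Prod>j\<in>{1..n}. f (i j) (y j)))"
      by (simp add: f_def sum_distrib_right prod.distrib mult.assoc)
  qed
  also have "\<dots> = (\<Sum>i\<in>bern_vectors n. ennreal (c i) * (\<Prod>j\<in>{1..n}. ennreal (LST_ord2 \<mu>X (i j) t)))"
  proof -
    have "f a \<in> borel_measurable borel" for a unfolding f_def by measurable
    then show ?thesis
      by (simp add: nn_integral_PiM_sum_prod[where f="\<lambda>i j. f (i j)"] bern_vectors_finite LST)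
  qed
  also have "\<dots> = ennreal (\<Sum>i\<in>bern_vectors n. c i * (\<Prod>j\<in>{1..n}. LST_ord2 \<mu>X (i j) t))"
    using c_nonneg LST_ord2_nonneg by (rule ennreal_sum_mult_prod[symmetric])
  finally show ?thesis by (simp add: fgm_expect_def c_def \<mu>X_def mult.assoc)
qed

lemma nn_integral_N_eq_prod_exp:
  fixes M :: "'a measure" and N :: "'a \<Rightarrow> nat" and X :: "nat \<Rightarrow> 'a \<Rightarrow> real"
  assumes P: "prob_space M"
    and N_meas[measurable]: "N \<in> measurable M (count_space UNIV)"
    and X_meas: "\<And>j. 1 \<le> j \<Longrightarrow> X j \<in> borel_measurable M"
    and X_nonneg: "\<And>j. 1 \<le> j \<Longrightarrow> AE \<omega> in M. 0 \<le> X j \<omega>"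
    and adm: "le_sup_support M N n \<Longrightarrow> fgm_admissible \<theta> n"
    and copula: "\<And>m x. le_sup_support M N n \<Longrightarrow>
        measure M {\<omega>\<in>space M. N \<omega> \<le> m \<and> (\<forall>j\<in>{1..n}. X j \<omega> \<le> x j)}
        = fgm_copula \<theta> n (\<lambda>m'. if m' = 0 then measure M {\<omega>\<in>space M. N \<omega> \<le> m}
                                else measure M {\<omega>\<in>space M. X 1 \<omega> \<le> x m'})"
    and t: "0 \<le> t" and n: "1 \<le> n"
  shows "(\<integral>\<^sup>+\<omega>. indicator {\<omega>\<in>space M. N \<omega> = n} \<omega> * (\<Prod>j\<in>{1..n}. ennreal (exp (- t * X j \<omega>))) \<partial>M)
       = ennreal (if le_sup_support M N n then fgm_expect \<theta> n (\<lambda>i. pmf_ord2 (distr M (count_space UNIV) N) (i 0) n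
                   * (\<Prod>j=1..n. LST_ord2 (distr M borel (X 1)) (i j) t)) else 0)"
proof -
  interpret prob_space M by fact
  define A where "A = {\<omega>\<in>space M. N \<omega> = n}"
  have A_sets: "A \<in> sets M" unfolding A_def by measurable
  show ?thesis
  proof (cases "le_sup_support M N n")
    case False
    then have "\<not> 0 < measure M A" unfolding le_sup_support_def A_def by blast
    then have "A \<in> null_sets M"
      using A_sets measure_nonneg[of M A] by (simp add: null_sets_def emeasure_eq_measure)
    then have "AE \<omega> in M. \<omega> \<notin> A" by (rule AE_not_in)
    then have "(\<integral>\<^sup>+\<omega>. indicator A \<omega> * (\<Prod>j\<in>{1..n}. ennreal (exp (- t * X j \<omega>))) \<partial>M) = (\<integral>\<^sup>+\<omega>. 0 \<partial>M)"
      by (intro nn_integral_cong_AE) (auto elim!: eventually_mono)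
    then show ?thesis using False by (simp add: A_def)
  next
    case supp: True
    show ?thesis
    proof (cases "t = 0")
      case True
      have "prob_space (distr M borel (X 1))"
        using X_meas[of 1] by (simp add: prob_space_distr)
      then have "fgm_expect \<theta> n (\<lambda>i. pmf_ord2 (distr M (count_space UNIV) N) (i 0) n
                   * (\<Prod>j=1..n. LST_ord2 (distr M borel (X 1)) (i j) t)) = measure M A"
        using True measure_N_eq_fgm_expect[OF P N_meas n, of \<theta>] by (simp add: LST_ord2_zero A_def)
      moreover have "(\<integral>\<^sup>+\<omega>. indicator A \<omega> * (\<Prod>j\<in>{1..n}. ennreal (exp (- t * X j \<omega>))) \<partial>M) = emeasure M A"
        using True A_sets by simp
      ultimately show ?thesis using supp by (simp add: A_def emeasure_eq_measure)
    next
      case False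
      then show ?thesis
        using nn_integral_N_eq_prod_exp_pos[OF P N_meas X_meas X_nonneg adm copula _ n] supp t by simp
    qed
  qed
qed

lemma nn_integral_exp_aggregate:
  fixes M :: "'a measure" and N :: "'a \<Rightarrow> nat" and X :: "nat \<Rightarrow> 'a \<Rightarrow> real"
  assumes N_meas[measurable]: "N \<in> measurable M (count_space UNIV)"
    and X_meas: "\<And>j. 1 \<le> j \<Longrightarrow> X j \<in> borel_measurable M"
  shows "(\<integral>\<^sup>+\<omega>. ennreal (exp (- t * aggregate N X \<omega>)) \<partial>M)
       = (\<Sum>n. \<integral>\<^sup>+\<omega>. indicator {\<omega>\<in>space M. N \<omega> = n} \<omega> * (\<Prod>j\<in>{1..n}. ennreal (exp (- t * X j \<omega>))) \<partial>M)"
proof -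
  define g where "g n \<omega> = indicator {\<omega>\<in>space M. N \<omega> = n} \<omega> * (\<Prod>j\<in>{1..n}. ennreal (exp (- t * X j \<omega>)))"
    for n \<omega>
  have g_meas: "g n \<in> borel_measurable M" for n
  proof -
    have "X j \<in> borel_measurable M" if "j \<in> {1..n}" for j using X_meas that by simp
    then show ?thesis unfolding g_def by measurable
  qed
  have "ennreal (exp (- t * aggregate N X \<omega>)) = (\<Sum>n. g n \<omega>)" if "\<omega> \<in> space M" for \<omega>
  proof -
    have "(\<lambda>n. g n \<omega>) = (\<lambda>n. if n = N \<omega> then g n \<omega> else 0)"
      by (rule ext) (use that in \<open>simp add: g_def\<close>)
    then have "(\<Sum>n. g n \<omega>) = g (N \<omega>) \<omega>"
      by (simp only:) (rule sums_unique[OF sums_single, symmetric])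
    also have "\<dots> = ennreal (\<Prod>j\<in>{1..N \<omega>}. exp (- t * X j \<omega>))"
      using that by (simp add: g_def prod_ennreal)
    also have "(\<Prod>j\<in>{1..N \<omega>}. exp (- t * X j \<omega>)) = exp (- t * aggregate N X \<omega>)"
      by (simp add: aggregate_def exp_sum sum_distrib_left)
    finally show ?thesis by simp
  qed
  then have "(\<integral>\<^sup>+\<omega>. ennreal (exp (- t * aggregate N X \<omega>)) \<partial>M) = (\<integral>\<^sup>+\<omega>. (\<Sum>n. g n \<omega>) \<partial>M)"
    by (rule nn_integral_cong)
  also have "\<dots> = (\<Sum>n. \<integral>\<^sup>+\<omega>. g n \<omega> \<partial>M)"
    by (rule nn_integral_suminf) (rule g_meas)
  finally show ?thesis by (simp add: g_def)
qed

lemma integral_exp_aggregate_eq_suminf: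
  fixes M :: "'a measure" and N :: "'a \<Rightarrow> nat" and X :: "nat \<Rightarrow> 'a \<Rightarrow> real" and r :: "nat \<Rightarrow> real"
  assumes P: "prob_space M"
    and N_meas[measurable]: "N \<in> measurable M (count_space UNIV)"
    and X_meas: "\<And>j. 1 \<le> j \<Longrightarrow> X j \<in> borel_measurable M"
    and X_nonneg: "\<And>j. 1 \<le> j \<Longrightarrow> AE \<omega> in M. 0 \<le> X j \<omega>"
    and t: "0 \<le> t"
    and r: "\<And>n. 1 \<le> n \<Longrightarrow>
      (\<integral>\<^sup>+\<omega>. indicator {\<omega>\<in>space M. N \<omega> = n} \<omega> * (\<Prod>j\<in>{1..n}. ennreal (exp (- t * X j \<omega>))) \<partial>M)
        = ennreal (r n)"
    and r_nonneg: "\<And>n. 0 \<le> r n" and r_0: "r 0 = 0"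
  shows "summable r"
    and "(\<integral>\<omega>. exp (- t * aggregate N X \<omega>) \<partial>M) = measure M {\<omega>\<in>space M. N \<omega> = 0} + (\<Sum>n. r n)"
proof -
  interpret prob_space M by fact
  define P0 where "P0 = measure M {\<omega>\<in>space M. N \<omega> = 0}"
  define s where "s n = (if n = 0 then P0 else 0) + r n" for n
  have s_nonneg: "0 \<le> s n" for n
    using r_nonneg by (simp add: s_def P0_def)
  have "(\<integral>\<^sup>+\<omega>. indicator {\<omega>\<in>space M. N \<omega> = n} \<omega> * (\<Prod>j\<in>{1..n}. ennreal (exp (- t * X j \<omega>))) \<partial>M)
      = ennreal (s n)" for n
    using r[of n] by (cases "n = 0") (simp_all add: s_def P0_def r_0 emeasure_eq_measure)
  then have nn_integral_eq: "(\<integral>\<^sup>+\<omega>. ennreal (exp (- t * aggregate N X \<omega>)) \<partial>M) = (\<Sum>n. ennreal (s n))"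
    using nn_integral_exp_aggregate[OF N_meas X_meas] by simp
  have "AE \<omega> in M. \<forall>j. 1 \<le> j \<longrightarrow> 0 \<le> X j \<omega>"
    unfolding AE_all_countable using X_nonneg by auto
  then have "AE \<omega> in M. ennreal (exp (- t * aggregate N X \<omega>)) \<le> 1"
    by eventually_elim (use t in \<open>auto simp: aggregate_def intro!: sum_nonneg mult_nonneg_nonneg\<close>)
  then have "(\<integral>\<^sup>+\<omega>. ennreal (exp (- t * aggregate N X \<omega>)) \<partial>M) \<le> 1"
    using nn_integral_mono_AE[where v="\<lambda>_. 1"] by (fastforce simp: emeasure_space_1)
  then have s_summable: "summable s"
    using nn_integral_eq by (intro summable_suminf_not_top[OF s_nonneg]) (auto simp: top_unique)
  show r_summable: "summable r"
    by (rule summable_comparison_test'[OF s_summable]) (simp add: s_def P0_def r_nonneg)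
  have "s sums (P0 + (\<Sum>n. r n))"
    unfolding s_def by (rule sums_add[OF sums_single[of 0 "\<lambda>_. P0"] summable_sums[OF r_summable]])
  then have "(\<Sum>n. ennreal (s n)) = ennreal (P0 + (\<Sum>n. r n))"
    using suminf_ennreal2[OF s_nonneg s_summable] by (simp add: sums_unique[symmetric])
  moreover have "aggregate N X \<in> borel_measurable M"
  proof -
    have "(\<lambda>\<omega>. \<Sum>j=1..n. X j \<omega>) \<in> borel_measurable M" for n
      using X_meas by (intro borel_measurable_sum) auto
    from measurable_compose_countable[OF this N_meas] show ?thesis
      by (simp add: aggregate_def[abs_def])
  qed
  ultimately show "(\<integral>\<omega>. exp (- t * aggregate N X \<omega>) \<partial>M) = measure M {\<omega>\<in>space M. N \<omega> = 0} + (\<Sum>n. r n)"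
    using nn_integral_eq r_summable r_nonneg
    by (simp add: integral_eq_nn_integral P0_def suminf_nonneg del: ennreal_plus)
qed

subsection \<open>Grouping the Bernoulli vectors by I_0 and K_n\<close>

lemma prod_bernoulli_eq_powers:
  fixes L :: "nat \<Rightarrow> 'b::comm_monoid_mult"
  assumes "\<And>j. j \<in> {1..n} \<Longrightarrow> i j \<le> 1"
  shows "(\<Prod>j=1..n. L (i j)) = L 0 ^ (n - (\<Sum>j=1..n. i j)) * L 1 ^ (\<Sum>j=1..n. i j)"
  using assms
proof (induction n)
  case (Suc n)
  have IH: "(\<Prod>j=1..n. L (i j)) = L 0 ^ (n - (\<Sum>j=1..n. i j)) * L 1 ^ (\<Sum>j=1..n. i j)"
    using Suc by simp
  have K_le: "(\<Sum>j=1..n. i j) \<le> n"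
    using Suc.prems sum_bounded_above[of "{1..n}" i 1] by simp
  have "i (Suc n) = 0 \<or> i (Suc n) = 1"
    using Suc.prems[of "Suc n"] by auto
  then show ?case
  proof
    assume "i (Suc n) = 0"
    then show ?thesis using IH K_le by (simp add: Suc_diff_le mult_ac)
  next
    assume "i (Suc n) = 1"
    then show ?thesis using IH by (simp add: mult_ac)
  qed
qed simp

lemma fgm_expect_regroup:
  fixes p L :: "nat \<Rightarrow> real"
  shows "fgm_expect \<theta> n (\<lambda>i. p (i 0) * (\<Prod>j=1..n. L (i j)))
     = (\<Sum>a\<in>{0,1::nat}. p a * (\<Sum>k=0..n. prob_I0_K \<theta> n a k * L 0 ^ (n - k) * L 1 ^ k))"
proof -
  let ?B = "bern_vectors n"
  let ?K = "\<lambda>i. \<Sum>j=1..n. i j"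
  define f where "f i = fgm_pmf \<theta> n i * (p (i 0) * (\<Prod>j=1..n. L (i j)))" for i
  have fibre: "(\<Sum>i\<in>{i\<in>?B. (i 0, ?K i) = (a, k)}. f i) = p a * (prob_I0_K \<theta> n a k * L 0 ^ (n - k) * L 1 ^ k)"
    for a k
  proof -
    have "f i = fgm_pmf \<theta> n i * (p a * (L 0 ^ (n - k) * L 1 ^ k))"
      if "i \<in> {i\<in>?B. (i 0, ?K i) = (a, k)}" for i
    proof -
      have "\<And>j. j \<in> {1..n} \<Longrightarrow> i j \<le> 1" using that bern_vectors_le_1 by auto
      then show ?thesis using that prod_bernoulli_eq_powers[of n i L] by (simp add: f_def)
    qed
    then have "(\<Sum>i\<in>{i\<in>?B. (i 0, ?K i) = (a, k)}. f i)
        = (\<Sum>i\<in>{i\<in>?B. (i 0, ?K i) = (a, k)}. fgm_pmf \<theta> n i * (p a * (L 0 ^ (n - k) * L 1 ^ k)))"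
      by (rule sum.cong[OF refl])
    then show ?thesis
      by (simp add: prob_I0_K_def sum_distrib_left sum_distrib_right mult_ac)
  qed
  have "(\<lambda>i. (i 0, ?K i)) ` ?B \<subseteq> {0,1} \<times> {0..n}"
  proof (rule image_subsetI)
    fix i assume "i \<in> ?B"
    then have "\<And>j. j \<in> {0..n} \<Longrightarrow> i j \<le> 1" by (rule bern_vectors_le_1)
    then show "(i 0, ?K i) \<in> {0, 1} \<times> {0..n}"
      using sum_bounded_above[of "{1..n}" i 1] le_Suc_eq[of "i 0" 0] by auto
  qed
  then have "(\<Sum>i\<in>?B. f i) = (\<Sum>ak\<in>{0,1::nat} \<times> {0..n}. \<Sum>i\<in>{i\<in>?B. (i 0, ?K i) = ak}. f i)"
    by (intro sum.group[symmetric]) (simp_all add: bern_vectors_finite)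
  also have "\<dots> = (\<Sum>a\<in>{0,1::nat}. p a * (\<Sum>k=0..n. prob_I0_K \<theta> n a k * L 0 ^ (n - k) * L 1 ^ k))"
    by (simp only: sum.cartesian_product' fibre sum_distrib_left)
  finally show ?thesis by (simp add: fgm_expect_def f_def)
qed

lemma suminf_sum_nonneg:
  fixes q :: "'i \<Rightarrow> nat \<Rightarrow> real"
  assumes "finite A" and "summable (\<lambda>n. \<Sum>a\<in>A. q a n)" and "\<And>a n. a \<in> A \<Longrightarrow> 0 \<le> q a n"
  shows "(\<Sum>n. \<Sum>a\<in>A. q a n) = (\<Sum>a\<in>A. \<Sum>n. q a n)"
proof (rule suminf_sum)
  fix a assume "a \<in> A"
  then show "summable (q a)"
    using assms by (intro summable_comparison_test'[OF assms(2)]) (auto intro!: member_le_sum)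
qed

theorem mainTheorem12:
  fixes M :: "'a measure" and N :: "'a \<Rightarrow> nat" and X :: "nat \<Rightarrow> 'a \<Rightarrow> real"
    and \<theta> :: "nat set \<Rightarrow> real" and t :: real
  assumes P: "prob_space M"
    and N_meas: "N \<in> measurable M (count_space UNIV)"
    and X_meas: "\<And>j. 1 \<le> j \<Longrightarrow> X j \<in> borel_measurable M"
    and X_pos: "\<And>j. 1 \<le> j \<Longrightarrow> AE \<omega> in M. 0 < X j \<omega>"
    and X_ident: "\<And>j. 1 \<le> j \<Longrightarrow> distr M borel (X j) = distr M borel (X 1)"
    and adm: "\<And>k. 1 \<le> k \<Longrightarrow> le_sup_support M N k \<Longrightarrow> fgm_admissible \<theta> k"
    and copula: "\<And>k n x. 1 \<le> k \<Longrightarrow> le_sup_support M N k \<Longrightarrow>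
        measure M {\<omega>\<in>space M. N \<omega> \<le> n \<and> (\<forall>j\<in>{1..k}. X j \<omega> \<le> x j)}
        = fgm_copula \<theta> k (\<lambda>m. if m = 0 then measure M {\<omega>\<in>space M. N \<omega> \<le> n}
                                else measure M {\<omega>\<in>space M. X 1 \<omega> \<le> x m})"
    and exch: "\<And>k \<pi>. 1 \<le> k \<Longrightarrow> le_sup_support M N k \<Longrightarrow> \<pi> permutes {1..k} \<Longrightarrow>
        distr M (count_space UNIV \<Otimes>\<^sub>M PiM {1..k} (\<lambda>_. borel))
          (\<lambda>\<omega>. (N \<omega>, \<lambda>j\<in>{1..k}. X (\<pi> j) \<omega>))
        = distr M (count_space UNIV \<Otimes>\<^sub>M PiM {1..k} (\<lambda>_. borel))
          (\<lambda>\<omega>. (N \<omega>, \<lambda>j\<in>{1..k}. X j \<omega>))"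
    and t: "0 \<le> t"
  shows "(\<integral>\<omega>. exp (- t * aggregate N X \<omega>) \<partial>M)
         = measure M {\<omega>\<in>space M. N \<omega> = 0}
           + (\<Sum>n. if 1 \<le> n \<and> le_sup_support M N n then
                fgm_expect \<theta> n (\<lambda>i. pmf_ord2 (distr M (count_space UNIV) N) (i 0) n
                   * (\<Prod>j=1..n. LST_ord2 (distr M borel (X 1)) (i j) t))
              else 0)
       \<and> measure M {\<omega>\<in>space M. N \<omega> = 0}
           + (\<Sum>n. if 1 \<le> n \<and> le_sup_support M N n then
                fgm_expect \<theta> n (\<lambda>i. pmf_ord2 (distr M (count_space UNIV) N) (i 0) n
                   * (\<Prod>j=1..n. LST_ord2 (distr M borel (X 1)) (i j) t))
              else 0)
         = measure M {\<omega>\<in>space M. N \<omega> = 0}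
           + (\<Sum>a\<in>{0,1::nat}. \<Sum>n. if 1 \<le> n \<and> le_sup_support M N n then
                pmf_ord2 (distr M (count_space UNIV) N) a n
                * (\<Sum>k=0..n. prob_I0_K \<theta> n a k
                     * LST_ord2 (distr M borel (X 1)) 0 t ^ (n - k)
                     * LST_ord2 (distr M borel (X 1)) 1 t ^ k)
              else 0)"
proof -
  define r where "r n = (if 1 \<le> n \<and> le_sup_support M N n then
      fgm_expect \<theta> n (\<lambda>i. pmf_ord2 (distr M (count_space UNIV) N) (i 0) n
        * (\<Prod>j=1..n. LST_ord2 (distr M borel (X 1)) (i j) t)) else 0)" for n
  define q where "q a n = (if 1 \<le> n \<and> le_sup_support M N n then
      pmf_ord2 (distr M (count_space UNIV) N) a n
      * (\<Sum>k=0..n. prob_I0_K \<theta> n a k * LST_ord2 (distr M borel (X 1)) 0 t ^ (n - k)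
                                   * LST_ord2 (distr M borel (X 1)) 1 t ^ k) else 0)" for a n
  have X_nonneg: "AE \<omega> in M. 0 \<le> X j \<omega>" if "1 \<le> j" for j
    using X_pos[OF that] by eventually_elim simp
  have r_nonneg: "0 \<le> r n" for n
    unfolding r_def using adm
    by (auto intro!: fgm_expect_nonneg mult_nonneg_nonneg prod_nonneg LST_ord2_nonneg simp: pmf_ord2_def)
  have r_terms: "(\<integral>\<^sup>+\<omega>. indicator {\<omega>\<in>space M. N \<omega> = n} \<omega> * (\<Prod>j\<in>{1..n}. ennreal (exp (- t * X j \<omega>))) \<partial>M)
      = ennreal (r n)" if "1 \<le> n" for n
    using nn_integral_N_eq_prod_exp[OF P N_meas X_meas X_nonneg adm copula t that] that
    by (simp add: r_def)
  have r_0: "r 0 = 0" by (simp add: r_def)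
  note series =
    integral_exp_aggregate_eq_suminf[of M N X t r, OF P N_meas X_meas X_nonneg t r_terms r_nonneg r_0]
  have r_split: "r = (\<lambda>n. \<Sum>a\<in>{0,1::nat}. q a n)"
  proof
    fix n
    show "r n = (\<Sum>a\<in>{0,1::nat}. q a n)"
      using fgm_expect_regroup[of \<theta> n "\<lambda>a. pmf_ord2 (distr M (count_space UNIV) N) a n"
          "\<lambda>a. LST_ord2 (distr M borel (X 1)) a t"]
      by (simp add: r_def q_def)
  qed
  have q_nonneg: "0 \<le> q a n" for a n
    unfolding q_def using adm
    by (auto intro!: mult_nonneg_nonneg sum_nonneg prob_I0_K_nonneg zero_le_power LST_ord2_nonneg
        simp: pmf_ord2_def)
  have "(\<Sum>n. r n) = (\<Sum>a\<in>{0,1::nat}. \<Sum>n. q a n)"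
    using series(1) unfolding r_split by (intro suminf_sum_nonneg) (simp_all add: q_nonneg)
  then show ?thesis
    using series(2) by (simp add: r_def q_def)
qed

end
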